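(* Consider the distributed detection model described in the context, with fixed $N\ge 1$, priors $P_0,P_1\in(0,1)$, and local operating point $0<P_f<P_d<1$. Say that the fusion center is blind for a triple $(\alpha,P_{1,0},P_{0,1})\in[0,1]^3$ if $P(H_i\mid \mathbf u)=P(H_i)$ for $i=0,1$ and every $\mathbf u\in\{0,1\}^N$ (equivalently $P(\mathbf u\mid H_0)=P(\mathbf u\mid H_1)$ for all $\mathbf u$). Then the smallest fraction $\alpha\in[0,1]$ for which there exist Byzantine flipping probabilities $(P_{1,0},P_{0,1})\in[0,1]^2$ making the fusion center blind is $\alpha_{blind}=1/2$.
   Context: Binary hypothesis test between $H_0$ (signal absent) and $H_1$ (signal present) with prior probabilities $P_0=P(H_0)$, $P_1=P(H_1)$, $P_0+P_1=1$. There are $N$ sensors; each sensor $i$ makes a local binary decision $v_i\in\{0,1\}$, and, conditionally on the hypothesis, the $v_i$ are i.i.d. with $P(v_i=1\mid H_1)=P_d$, $P(v_i=1\mid H_0)=P_f$. Each sensor, independently, is a Byzantine with probability $\alpha\in[0,1]$ (and honest otherwise). An honest node sends $u_i=v_i$ to the fusion center. A Byzantine node sends $u_i=1$ with probability $P_{1,0}$ when $v_i=0$ and sends $u_i=0$ with probability $P_{0,1}$ when $v_i=1$ (so it sends $u_i=1$ with probability $1-P_{0,1}$ when $v_i=1$). Consequently, conditionally on $H_j$, the $u_i$ are i.i.d. Bernoulli with $P(u_i=1\mid H_0)=\pi_{1,0}=\alpha(P_{1,0}(1-P_f)+(1-P_{0,1})P_f)+(1-\alpha)P_f$ and $P(u_i=1\mid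 H_1)=\pi_{1,1}=\alpha(P_{1,0}(1-P_d)+(1-P_{0,1})P_d)+(1-\alpha)P_d$. The fusion center observes $\mathbf u=(u_1,\dots,u_N)$. *)

theory Defs
  imports Complex_Main
begin

text \<open>Probability that a sensor reports u_i = 1 under H0 (pi_{1,0}) and under H1 (pi_{1,1}).\<close>
definition pi10 :: "real \<Rightarrow> real \<Rightarrow> real \<Rightarrow> real \<Rightarrow> real" where
  "pi10 Pf \<alpha> P10 P01 = \<alpha> * (P10 * (1 - Pf) + (1 - P01) * Pf) + (1 - \<alpha>) * Pf"

definition pi11 :: "real \<Rightarrow> real \<Rightarrow> real \<Rightarrow> real \<Rightarrow> real" where
  "pi11 Pd \<alpha> P10 P01 = \<alpha> * (P10 * (1 - Pd) + (1 - P01) * Pd) + (1 - \<alpha>) * Pd"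

text \<open>Likelihood of the report vector u (a list of N bits, True = 1) when the
  u_i are i.i.d. Bernoulli(p).\<close>
definition lik :: "real \<Rightarrow> bool list \<Rightarrow> real" where
  "lik p u = (\<Prod>b\<leftarrow>u. if b then p else 1 - p)"

definition marg :: "real \<Rightarrow> real \<Rightarrow> real \<Rightarrow> real \<Rightarrow> bool list \<Rightarrow> real" where
  "marg P0 P1 q0 q1 u = P0 * lik q0 u + P1 * lik q1 u"

definition post0 :: "real \<Rightarrow> real \<Rightarrow> real \<Rightarrow> real \<Rightarrow> bool list \<Rightarrow> real" where
  "post0 P0 P1 q0 q1 u = P0 * lik q0 u / marg P0 P1 q0 q1 u"

definition post1 :: "real \<Rightarrow> real \<Rightarrow> real \<Rightarrow> real \<Rightarrow> bool list \<Rightarrow> real" where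
  "post1 P0 P1 q0 q1 u = P1 * lik q1 u / marg P0 P1 q0 q1 u"

text \<open>The fusion center is blind for (alpha, P10, P01): for every observable
  u in {0,1}^N (i.e. with positive probability, so that the conditional
  probability is defined) the posteriors equal the priors.\<close>
definition blind :: "nat \<Rightarrow> real \<Rightarrow> real \<Rightarrow> real \<Rightarrow> real \<Rightarrow> real \<Rightarrow> real \<Rightarrow> real \<Rightarrow> bool" where
  "blind N P0 P1 Pf Pd \<alpha> P10 P01 \<longleftrightarrow>
     (\<forall>u. length u = N \<longrightarrow> marg P0 P1 (pi10 Pf \<alpha> P10 P01) (pi11 Pd \<alpha> P10 P01) u > 0 \<longrightarrow>
        post0 P0 P1 (pi10 Pf \<alpha> P10 P01) (pi11 Pd \<alpha> P10 P01) u = P0 \<and>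
        post1 P0 P1 (pi10 Pf \<alpha> P10 P01) (pi11 Pd \<alpha> P10 P01) u = P1)"

end

theory Submission
  imports Defs
begin

text \<open>Given the hypothesis, the reports are i.i.d. Bernoulli with parameter pi10 or pi11, so
  the fusion center is blind exactly when these two product laws agree on every observable
  report vector. Since pi11 - pi10 = (Pd - Pf) (1 - \<alpha> (P10 + P01)), for \<alpha> < 1/2 the
  all-ones vector is strictly more likely under H1; for \<alpha> = 1/2 the Byzantines can always
  flip (P10 = P01 = 1), which makes both parameters equal to 1/2.\<close>

lemma pi11_minus_pi10:
  "pi11 Pd \<alpha> P10 P01 - pi10 Pf \<alpha> P10 P01 = (Pd - Pf) * (1 - \<alpha> * (P10 + P01))"
  unfolding pi10_def pi11_def by (simp add: algebra_simps)

lemma pi10_nonneg: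
  assumes "0 \<le> \<alpha>" "\<alpha> \<le> 1" "0 \<le> P10" "0 \<le> P01" "P01 \<le> 1" "0 \<le> Pf" "Pf \<le> 1"
  shows "0 \<le> pi10 Pf \<alpha> P10 P01"
  unfolding pi10_def using assms by (intro add_nonneg_nonneg mult_nonneg_nonneg) auto

lemma pi10_less_pi11:
  assumes "0 \<le> \<alpha>" "\<alpha> < 1/2" "P10 \<le> 1" "P01 \<le> 1" "Pf < Pd"
  shows "pi10 Pf \<alpha> P10 P01 < pi11 Pd \<alpha> P10 P01"
proof -
  have "\<alpha> * (P10 + P01) \<le> \<alpha> * 2"
    using assms by (intro mult_left_mono) auto
  then have "0 < (Pd - Pf) * (1 - \<alpha> * (P10 + P01))"
    using assms by (intro mult_pos_pos) auto
  then show ?thesis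
    using pi11_minus_pi10[of Pd \<alpha> P10 P01 Pf] by linarith
qed

lemma lik_replicate_True: "lik p (replicate N True) = p ^ N"
  by (induction N) (auto simp: lik_def)

lemma posteriors_eq_priors_iff:
  assumes "0 < P0" "0 < P1" "P0 + P1 = 1" "0 < marg P0 P1 q0 q1 u"
  shows "post0 P0 P1 q0 q1 u = P0 \<and> post1 P0 P1 q0 q1 u = P1 \<longleftrightarrow> lik q0 u = lik q1 u"
proof -
  have P0: "P0 = 1 - P1"
    using assms(3) by simp
  have "post0 P0 P1 q0 q1 u = P0 \<longleftrightarrow> lik q0 u = P0 * lik q0 u + P1 * lik q1 u"
    using assms by (simp add: post0_def marg_def divide_eq_eq)
  also have "\<dots> \<longleftrightarrow> P1 * lik q0 u = P1 * lik q1 u"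
    unfolding P0 by (auto simp: algebra_simps)
  finally have "post0 P0 P1 q0 q1 u = P0 \<longleftrightarrow> lik q0 u = lik q1 u"
    using assms(2) by simp
  moreover have "post1 P0 P1 q0 q1 u = P1 \<longleftrightarrow> lik q1 u = P0 * lik q0 u + P1 * lik q1 u"
    using assms by (simp add: post1_def marg_def divide_eq_eq)
  moreover have "\<dots> \<longleftrightarrow> P0 * lik q1 u = P0 * lik q0 u"
    unfolding P0 by (auto simp: algebra_simps)
  ultimately show ?thesis
    using assms(1) by auto
qed

lemma blind_half_always_flip:
  assumes "0 < P0" "0 < P1" "P0 + P1 = 1"
  shows "blind N P0 P1 Pf Pd (1/2) 1 1"
proof -
  have half: "pi10 Pf (1/2) 1 1 = 1/2" "pi11 Pd (1/2) 1 1 = 1/2"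
    by (simp_all add: pi10_def pi11_def field_simps)
  show ?thesis
    unfolding blind_def half using posteriors_eq_priors_iff[OF assms] by simp
qed

lemma blind_imp_half_le:
  assumes "N \<ge> 1" "0 < P0" "0 < P1" "P0 + P1 = 1" "0 \<le> Pf" "Pf < Pd" "Pd \<le> 1"
    and "0 \<le> \<alpha>" "\<alpha> \<le> 1" "0 \<le> P10" "P10 \<le> 1" "0 \<le> P01" "P01 \<le> 1"
    and blind: "blind N P0 P1 Pf Pd \<alpha> P10 P01"
  shows "1/2 \<le> \<alpha>"
proof (rule ccontr)
  assume "\<not> 1/2 \<le> \<alpha>"
  define q0 where "q0 = pi10 Pf \<alpha> P10 P01"
  define q1 where "q1 = pi11 Pd \<alpha> P10 P01"
  have "0 \<le> q0" "q0 < q1"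
    unfolding q0_def q1_def using assms \<open>\<not> 1/2 \<le> \<alpha>\<close>
    by (auto intro: pi10_nonneg pi10_less_pi11)
  let ?u = "replicate N True"
  have lik_less: "lik q0 ?u < lik q1 ?u"
    unfolding lik_replicate_True using \<open>0 \<le> q0\<close> \<open>q0 < q1\<close> assms(1)
    by (intro power_strict_mono) auto
  moreover have "0 < marg P0 P1 q0 q1 ?u"
    unfolding marg_def lik_replicate_True using assms(2,3) \<open>0 \<le> q0\<close> \<open>q0 < q1\<close>
    by (intro add_nonneg_pos mult_pos_pos) auto
  ultimately show False
    using blind posteriors_eq_priors_iff[OF assms(2-4)]
    unfolding blind_def q0_def q1_def by force
qed

theorem lemma1:
  fixes N :: nat and P0 P1 Pf Pd :: real
  assumes "N \<ge> 1"
    and "0 < P0" and "P0 < 1" and "0 < P1" and "P1 < 1" and "P0 + P1 = 1"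
    and "0 < Pf" and "Pf < Pd" and "Pd < 1"
  shows "(1/2::real) \<in> {\<alpha> \<in> {0..1}. \<exists>P10 \<in> {0..1}. \<exists>P01 \<in> {0..1}.
                    blind N P0 P1 Pf Pd \<alpha> P10 P01}
         \<and> (\<forall>\<alpha> \<in> {0..1}. (\<exists>P10 \<in> {0..1}. \<exists>P01 \<in> {0..1}.
                    blind N P0 P1 Pf Pd \<alpha> P10 P01) \<longrightarrow> 1/2 \<le> \<alpha>)"
proof
  show "(1/2::real) \<in> {\<alpha> \<in> {0..1}. \<exists>P10 \<in> {0..1}. \<exists>P01 \<in> {0..1}.
                    blind N P0 P1 Pf Pd \<alpha> P10 P01}"
    using blind_half_always_flip[OF assms(2,4,6)] by force
  show "\<forall>\<alpha> \<in> {0..1}. (\<exists>P10 \<in> {0..1}. \<exists>P01 \<in> {0..1}.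
                    blind N P0 P1 Pf Pd \<alpha> P10 P01) \<longrightarrow> 1/2 \<le> \<alpha>"
  proof (intro ballI impI)
    fix \<alpha> :: real
    assume "\<alpha> \<in> {0..1}" "\<exists>P10 \<in> {0..1}. \<exists>P01 \<in> {0..1}. blind N P0 P1 Pf Pd \<alpha> P10 P01"
    then obtain P10 P01 where "\<alpha> \<in> {0..1}" "P10 \<in> {0..1}" "P01 \<in> {0..1}"
      and "blind N P0 P1 Pf Pd \<alpha> P10 P01"
      by blast
    then show "1/2 \<le> \<alpha>"
      using assms(7-9) by (intro blind_imp_half_le[OF assms(1,2,4,6)]) auto
  qed
qed

end
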